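(* Let $(\mathcal N,\mathcal M,\mathbf w,\mathbf v)$ be a chore-allocation instance with $w_1\ge w_i$ for all $i$. Define new weights $w'_i=w_1/2^{p_i}$ where $p_i=\lfloor\log_{1/2}(w_i/w_1)\rfloor$ (so $w_i\le w'_i<2w_i$), keeping agents, items and cost functions unchanged. Then for every agent $a_i$, the weighted maximin share of $a_i$ in the new instance is at most twice the weighted maximin share of $a_i$ in the original instance.
   Context: A chore-allocation instance consists of agents $\mathcal N=\{a_1,\dots,a_n\}$, a finite set $\mathcal M$ of indivisible items, positive weights $w_1,\dots,w_n$, and additive cost functions $v_i:2^{\mathcal M}\to\mathbb R_{\ge0}$. An allocation is an ordered partition $(A_1,\dots,A_n)$ of $\mathcal M$ (bundles may be empty), $\mathcal A$ the set of all allocations. The weighted maximin share of $a_i$ (with respect to weights $w$) is $\mathsf{WMMS}_i=w_i\cdot\min_{(A_1,\dots,A_n)\in\mathcal A}\max_{j\in[n]}\frac{v_i(A_j)}{w_j}$. *)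

theory Defs
  imports Complex_Main
begin

text \<open>Agents are indexed 0..<n (agent 0 plays the role of a_1).
  Items form a finite set M. Additive cost of agent i for a bundle S is the sum of
  the item costs v i x over x in S.\<close>

definition cost :: "(nat \<Rightarrow> 'b \<Rightarrow> real) \<Rightarrow> nat \<Rightarrow> 'b set \<Rightarrow> real" where
  "cost v i S = (\<Sum>x\<in>S. v i x)"

definition allocations :: "nat \<Rightarrow> 'b set \<Rightarrow> (nat \<Rightarrow> 'b set) set" where
  "allocations n M = {A. (\<Union>j\<in>{0..<n}. A j) = M
       \<and> (\<forall>j\<in>{0..<n}. \<forall>k\<in>{0..<n}. j \<noteq> k \<longrightarrow> A j \<inter> A k = {})
       \<and> (\<forall>j. j \<ge> n \<longrightarrow> A j = {})}"

definition WMMS :: "nat \<Rightarrow> 'b set \<Rightarrow> (nat \<Rightarrow> real) \<Rightarrow> (nat \<Rightarrow> 'b \<Rightarrow> real) \<Rightarrow> nat \<Rightarrow> real" where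
  "WMMS n M w v i = w i * (INF A\<in>allocations n M. (MAX j\<in>{0..<n}. cost v i (A j) / w j))"

end

theory Submission
  imports Defs
begin

text \<open>Rounding each weight up to the nearest number of the form \<open>w\<^sub>0 / 2\<^sup>k\<close> changes it
  by a factor in \<open>[1, 2)\<close>. Enlarging the weights can only lower every ratio
  \<open>v\<^sub>i(A\<^sub>j) / w\<^sub>j\<close> and hence the min-max value that \<open>WMMS\<close> scales by \<open>w\<^sub>i\<close>, while the scaling
  factor \<open>w\<^sub>i\<close> itself grows by less than a factor 2.\<close>

lemma div_powr_floor_log_half_bounds:
  fixes a b :: real
  assumes a: "0 < a" and b: "0 < b"
  defines "q \<equiv> \<lfloor>log (1/2) (a / b)\<rfloor>"
  shows "a \<le> b / 2 powr q" and "b / 2 powr q < 2 * a"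
proof -
  have log_eq: "log (1/2) (a / b) = log 2 (b / a)"
    using a b by (simp add: log_def ln_div divide_simps)
  have "2 powr q \<le> 2 powr log 2 (b / a)"
    using log_eq by (simp add: q_def)
  then have lower: "2 powr q \<le> b / a"
    using a b by simp
  have "2 powr log 2 (b / a) < 2 powr (q + 1)"
    using log_eq by (simp add: q_def)
  then have upper: "b / a < 2 * 2 powr q"
    using a b by (simp add: powr_add)
  show "a \<le> b / 2 powr q"
    using lower a by (simp add: field_simps)
  show "b / 2 powr q < 2 * a"
    using upper a by (simp add: field_simps)
qed

definition maxmin_ratio :: "nat \<Rightarrow> 'b set \<Rightarrow> (nat \<Rightarrow> real) \<Rightarrow> (nat \<Rightarrow> 'b \<Rightarrow> real) \<Rightarrow> nat \<Rightarrow> real"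
  where "maxmin_ratio n M w v i = (INF A\<in>allocations n M. MAX j\<in>{0..<n}. cost v i (A j) / w j)"

lemma WMMS_eq_maxmin_ratio: "WMMS n M w v i = w i * maxmin_ratio n M w v i"
  by (simp add: WMMS_def maxmin_ratio_def)

lemma allocations_nonempty:
  assumes "n \<ge> 1"
  shows "allocations n M \<noteq> {}"
proof -
  have "(\<lambda>j. if j = 0 then M else {}) \<in> allocations n M"
    using assms unfolding allocations_def by auto
  then show ?thesis
    by blast
qed

lemma cost_allocation_nonneg:
  assumes "A \<in> allocations n M" and "\<forall>x\<in>M. v i x \<ge> 0"
  shows "cost v i (A j) \<ge> 0"
proof -
  have "A j \<subseteq> M"
    using assms(1) unfolding allocations_def by (cases "j < n") auto
  then show ?thesis
    using assms(2) unfolding cost_def by (meson subsetD sum_nonneg)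
qed

lemma Max_ratio_antimono:
  fixes c w w' :: "nat \<Rightarrow> real"
  assumes "n \<ge> 1" and "\<forall>j<n. c j \<ge> 0" and "\<forall>j<n. 0 < w j \<and> w j \<le> w' j"
  shows "(MAX j\<in>{0..<n}. c j / w' j) \<le> (MAX j\<in>{0..<n}. c j / w j)"
proof (rule Max.boundedI)
  fix y
  assume "y \<in> (\<lambda>j. c j / w' j) ` {0..<n}"
  then obtain j where j: "j < n" and y: "y = c j / w' j"
    by auto
  have "y \<le> c j / w j"
    unfolding y using assms j by (intro divide_left_mono) auto
  also have "\<dots> \<le> (MAX j\<in>{0..<n}. c j / w j)"
    using j by (intro Max_ge) auto
  finally show "y \<le> (MAX j\<in>{0..<n}. c j / w j)" .
qed (use assms(1) in auto)

lemma Max_ratio_nonneg: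
  fixes c w :: "nat \<Rightarrow> real"
  assumes "n \<ge> 1" and "c 0 \<ge> 0" and "w 0 > 0"
  shows "(MAX j\<in>{0..<n}. c j / w j) \<ge> 0"
proof -
  have "0 \<le> c 0 / w 0"
    using assms by simp
  also have "\<dots> \<le> (MAX j\<in>{0..<n}. c j / w j)"
    using assms(1) by (intro Max_ge) auto
  finally show ?thesis .
qed

lemma maxmin_ratio_nonneg:
  assumes "n \<ge> 1" and "w 0 > 0" and "\<forall>x\<in>M. v i x \<ge> 0"
  shows "maxmin_ratio n M w v i \<ge> 0"
  unfolding maxmin_ratio_def
  using assms allocations_nonempty cost_allocation_nonneg
  by (intro cINF_greatest Max_ratio_nonneg) auto

lemma maxmin_ratio_antimono:
  assumes "n \<ge> 1" and "\<forall>x\<in>M. v i x \<ge> 0" and "\<forall>j<n. 0 < w j \<and> w j \<le> w' j"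
  shows "maxmin_ratio n M w' v i \<le> maxmin_ratio n M w v i"
proof -
  have bdd: "bdd_below ((\<lambda>A. MAX j\<in>{0..<n}. cost v i (A j) / w' j) ` allocations n M)"
    using assms cost_allocation_nonneg
    by (intro bdd_belowI[of _ 0]) (force intro: Max_ratio_nonneg)
  show ?thesis
    unfolding maxmin_ratio_def
  proof (rule cINF_mono)
    fix A
    assume "A \<in> allocations n M"
    then show "\<exists>B\<in>allocations n M. (MAX j\<in>{0..<n}. cost v i (B j) / w' j)
        \<le> (MAX j\<in>{0..<n}. cost v i (A j) / w j)"
      using assms cost_allocation_nonneg by (intro bexI[of _ A] Max_ratio_antimono) auto
  qed (use bdd assms allocations_nonempty in auto)
qed

theorem mainTheorem2:
  fixes n :: nat and M :: "'b set" and w :: "nat \<Rightarrow> real" and v :: "nat \<Rightarrow> 'b \<Rightarrow> real"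
    and w' :: "nat \<Rightarrow> real" and p :: "nat \<Rightarrow> int"
  assumes n_pos: "n \<ge> 1"
    and finM: "finite M"
    and w_pos: "\<forall>i<n. w i > 0"
    and v_nonneg: "\<forall>i<n. \<forall>x\<in>M. v i x \<ge> 0"
    and w0_max: "\<forall>i<n. w i \<le> w 0"
    and p_def: "\<forall>i<n. p i = \<lfloor>log (1/2) (w i / w 0)\<rfloor>"
    and w'_def: "\<forall>i<n. w' i = w 0 / 2 powr (real_of_int (p i))"
  shows "\<forall>i<n. WMMS n M w' v i \<le> 2 * WMMS n M w v i"
proof (intro allI impI)
  fix i
  assume i: "i < n"
  have w'_bounds: "w j \<le> w' j \<and> w' j < 2 * w j" if "j < n" for j
    using div_powr_floor_log_half_bounds[of "w j" "w 0"] that n_pos w_pos p_def w'_def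
    by auto
  have ratio_le: "maxmin_ratio n M w' v i \<le> maxmin_ratio n M w v i"
    using n_pos v_nonneg i w_pos w'_bounds by (intro maxmin_ratio_antimono) auto
  have ratio_nonneg: "maxmin_ratio n M w v i \<ge> 0"
    using n_pos v_nonneg i w_pos by (intro maxmin_ratio_nonneg) auto
  have "WMMS n M w' v i = w' i * maxmin_ratio n M w' v i"
    by (rule WMMS_eq_maxmin_ratio)
  also have "\<dots> \<le> w' i * maxmin_ratio n M w v i"
    using ratio_le w'_bounds[OF i] w_pos i by (intro mult_left_mono) auto
  also have "\<dots> \<le> (2 * w i) * maxmin_ratio n M w v i"
    using ratio_nonneg w'_bounds[OF i] by (intro mult_right_mono) auto
  also have "\<dots> = 2 * WMMS n M w v i"
    by (simp add: WMMS_eq_maxmin_ratio)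
  finally show "WMMS n M w' v i \<le> 2 * WMMS n M w v i" .
qed

end
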